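(* Let $V$, $f$, $\mathcal{A}$, $k,\tau,\eta$ be as described in the context (in particular $f$ normalized monotone submodular, $\mathcal{A}$ satisfying the $\beta$-iterative property, $\eta\ge4(\log k+1)$, $2\le\tau\le\frac{k}{3\eta(\log k+2)}$). Let $Y$ and $Z$ be buckets constructed by PRo such that $Z$ is constructed at a later time than $Y$, and let $E_Y\subseteq Y$ and $E_Z\subseteq Z$ be arbitrary. Let $X\subseteq V$ be any set and $\alpha\ge0$ a constant such that $$f((Y\setminus E_Y)\cup X)\ge\frac{1}{1+\alpha}f(Y)\quad\text{and}\quad f(E_Y\mid X)\le\alpha f(X).$$ Then, with $\alpha_{\mathrm{next}}=\beta\frac{|E_Z|}{|Y|}(1+\alpha)+\alpha$, $$f(E_Z\mid(Y\setminus E_Y)\cup X)\le\alpha_{\mathrm{next}}\,f((Y\setminus E_Y)\cup X)$$ and $$f((Z\setminus E_Z)\cup(Y\setminus E_Y)\cup X)\ge\frac{1}{1+\alpha_{\mathrm{next}}}f(Z).$$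
   Context: Notation: $f(Y\mid X):=f(X\cup Y)-f(X)$; logarithms are to base 2. $V$ is a finite ground set, $f:2^V\to\mathbb{R}_{\ge0}$ is normalized ($f(\emptyset)=0$), monotone and submodular. A subroutine $\mathcal{A}(k',T)$ outputs an ordered set $(v_1,\dots,v_{k'})$ of elements of $T\subseteq V$; $\mathcal{A}_i(T)=\{v_1,\dots,v_i\}$; it satisfies the $\beta$-iterative property ($\beta\ge1$) if $f(\mathcal{A}_{i+1}(T))-f(\mathcal{A}_i(T))\ge\frac1\beta\max_{v\in T}f(v\mid\mathcal{A}_i(T))$ for all $T,i$. Algorithm PRo (inputs $V,k,\tau,\eta\in\mathbb{N}_+,\mathcal{A}$): $S_0\leftarrow\emptyset$; for $i=0,\dots,\lceil\log\tau\rceil$ and for $j=1,\dots,\lceil\tau/2^i\rceil$: $B_j\leftarrow\mathcal{A}(2^i\eta,V\setminus S_0)$, $S_0\leftarrow S_0\cup B_j$ (each such $B_j$ is a bucket of partition $i$); then $S_1\leftarrow\mathcal{A}(k-|S_0|,V\setminus S_0)$; output $S=S_0\cup S_1$. *)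

theory Defs
  imports Complex_Main
begin

definition marg :: "('a set \<Rightarrow> real) \<Rightarrow> 'a set \<Rightarrow> 'a set \<Rightarrow> real" where
  "marg f Y X = f (X \<union> Y) - f X"

definition normalized :: "('a set \<Rightarrow> real) \<Rightarrow> bool" where
  "normalized f \<longleftrightarrow> f {} = 0"

definition nonneg_on :: "'a set \<Rightarrow> ('a set \<Rightarrow> real) \<Rightarrow> bool" where
  "nonneg_on V f \<longleftrightarrow> (\<forall>X. X \<subseteq> V \<longrightarrow> f X \<ge> 0)"

definition monotone_set_fun :: "'a set \<Rightarrow> ('a set \<Rightarrow> real) \<Rightarrow> bool" where
  "monotone_set_fun V f \<longleftrightarrow> (\<forall>X Y. X \<subseteq> Y \<longrightarrow> Y \<subseteq> V \<longrightarrow> f X \<le> f Y)"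

definition submodular :: "'a set \<Rightarrow> ('a set \<Rightarrow> real) \<Rightarrow> bool" where
  "submodular V f \<longleftrightarrow>
     (\<forall>X Y. X \<subseteq> V \<longrightarrow> Y \<subseteq> V \<longrightarrow> f X + f Y \<ge> f (X \<union> Y) + f (X \<inter> Y))"

definition subroutine_wf :: "'a set \<Rightarrow> (nat \<Rightarrow> 'a set \<Rightarrow> 'a list) \<Rightarrow> bool" where
  "subroutine_wf V A \<longleftrightarrow> (\<forall>k' T. T \<subseteq> V \<longrightarrow>
      distinct (A k' T) \<and> set (A k' T) \<subseteq> T \<and> length (A k' T) = min k' (card T))"

definition A_prefix :: "(nat \<Rightarrow> 'a set \<Rightarrow> 'a list) \<Rightarrow> nat \<Rightarrow> nat \<Rightarrow> 'a set \<Rightarrow> 'a set" where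
  "A_prefix A k' i T = set (take i (A k' T))"

definition beta_iterative ::
  "'a set \<Rightarrow> ('a set \<Rightarrow> real) \<Rightarrow> (nat \<Rightarrow> 'a set \<Rightarrow> 'a list) \<Rightarrow> real \<Rightarrow> bool" where
  "beta_iterative V f A \<beta> \<longleftrightarrow> (\<forall>k' T i. T \<subseteq> V \<longrightarrow> i < length (A k' T) \<longrightarrow>
      f (A_prefix A k' (Suc i) T) - f (A_prefix A k' i T)
        \<ge> (1 / \<beta>) * Max ((\<lambda>v. marg f {v} (A_prefix A k' i T)) ` T))"

definition pro_sizes :: "nat \<Rightarrow> nat \<Rightarrow> nat list" where
  "pro_sizes \<tau> \<eta> = concat (map (\<lambda>i. replicate (nat \<lceil>real \<tau> / 2 ^ i\<rceil>) (2 ^ i * \<eta>))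
                                  [0..<nat \<lceil>log 2 (real \<tau>)\<rceil> + 1])"

text \<open>Buckets, given the set R = V - S_0 of still available elements.\<close>
fun pro_buckets_aux :: "(nat \<Rightarrow> 'a set \<Rightarrow> 'a list) \<Rightarrow> 'a set \<Rightarrow> nat list \<Rightarrow> 'a set list" where
  "pro_buckets_aux A R [] = []"
| "pro_buckets_aux A R (s # ss) =
     (let B = set (A s R) in B # pro_buckets_aux A (R - B) ss)"

definition pro_buckets :: "(nat \<Rightarrow> 'a set \<Rightarrow> 'a list) \<Rightarrow> 'a set \<Rightarrow> nat \<Rightarrow> nat \<Rightarrow> 'a set list" where
  "pro_buckets A V \<tau> \<eta> = pro_buckets_aux A V (pro_sizes \<tau> \<eta>)"

end

theory Submission
  imports Defs
begin

text \<open>Let W = (Y - E_Y) \<union> X. Since Y \<union> X = W \<union> E_Y, diminishing returns give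
  f(E_Z | W) \<le> f(E_Z | Y) + f(E_Y | X) \<le> f(E_Z | Y) + \<alpha> f(W). The bucket Y was produced greedily
  from a ground set that still contained Z, so the \<beta>-iterative property and a telescoping sum show
  that every element of Z adds at most \<beta> f(Y) / |Y| to Y; hence
  f(E_Z | Y) \<le> \<beta> |E_Z| / |Y| f(Y) \<le> \<beta> |E_Z| / |Y| (1 + \<alpha>) f(W), which is the first claim.
  For the second, with U = (Z - E_Z) \<union> W we get
  f(Z) \<le> f(U) + f(E_Z | U) \<le> f(U) + f(E_Z | W) \<le> (1 + \<alpha>_next) f(U).\<close>

lemma submodular_marg_antimono:
  assumes mono: "monotone_set_fun V f" and sub: "submodular V f"
    and "A \<subseteq> B" "B \<subseteq> V" "C \<subseteq> V"
  shows "marg f C B \<le> marg f C A"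
proof -
  have "A \<union> C \<subseteq> V" "A \<subseteq> (A \<union> C) \<inter> B" "(A \<union> C) \<inter> B \<subseteq> V" using assms by auto
  then have "f (A \<union> C) + f B \<ge> f ((A \<union> C) \<union> B) + f ((A \<union> C) \<inter> B)"
    and "f A \<le> f ((A \<union> C) \<inter> B)"
    using sub[unfolded submodular_def, rule_format, of "A \<union> C" B] assms(4)
      mono[unfolded monotone_set_fun_def, rule_format, of A "(A \<union> C) \<inter> B"] by auto
  moreover have "(A \<union> C) \<union> B = B \<union> C" using assms by blast
  ultimately show ?thesis unfolding marg_def by simp
qed

lemma marg_le_sum_marg_singletons:
  assumes mono: "monotone_set_fun V f" and sub: "submodular V f"
    and "finite E" "E \<subseteq> V" "Y \<subseteq> V"
  shows "marg f E Y \<le> (\<Sum>e\<in>E. marg f {e} Y)"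
  using assms(3,4)
proof (induction E rule: finite_induct)
  case empty
  then show ?case by (simp add: marg_def)
next
  case (insert e F)
  have "marg f {e} (Y \<union> F) \<le> marg f {e} Y"
    using insert.prems assms(5) by (intro submodular_marg_antimono[OF mono sub]) auto
  moreover have "marg f (insert e F) Y = marg f F Y + marg f {e} (Y \<union> F)"
    unfolding marg_def by simp
  ultimately show ?case using insert by simp
qed

lemma beta_iterative_singleton_gain:
  assumes fin: "finite V" and norm: "normalized f" and mono: "monotone_set_fun V f"
    and sub: "submodular V f" and wf: "subroutine_wf V A" and \<beta>: "\<beta> \<ge> 1"
    and it: "beta_iterative V f A \<beta>" and T: "T \<subseteq> V" and e: "e \<in> T"
  shows "real (length (A s T)) * marg f {e} (set (A s T)) \<le> \<beta> * f (set (A s T))"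
proof -
  define L where "L = A s T"
  define p where "p i = A_prefix A s i T" for i
  have LV: "set L \<subseteq> V" using wf T unfolding subroutine_wf_def L_def by blast
  have step: "marg f {e} (set L) \<le> \<beta> * (f (p (Suc i)) - f (p i))" if "i < length L" for i
  proof -
    have "p i \<subseteq> set L" unfolding p_def A_prefix_def L_def by (rule set_take_subset)
    then have "marg f {e} (set L) \<le> marg f {e} (p i)"
      using LV e T by (intro submodular_marg_antimono[OF mono sub]) auto
    also have "\<dots> \<le> Max ((\<lambda>v. marg f {v} (p i)) ` T)"
      using finite_subset[OF T fin] e by (intro Max_ge) auto
    also have "\<dots> \<le> \<beta> * (f (p (Suc i)) - f (p i))"
    proof -
      have "Max ((\<lambda>v. marg f {v} (p i)) ` T) / \<beta> \<le> f (p (Suc i)) - f (p i)"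
        using it[unfolded beta_iterative_def, rule_format, OF T, of i s] that
        unfolding p_def L_def by simp
      then show ?thesis using \<beta> by (simp add: pos_divide_le_eq mult.commute)
    qed
    finally show ?thesis .
  qed
  have "real (length L) * marg f {e} (set L) \<le> (\<Sum>i<length L. \<beta> * (f (p (Suc i)) - f (p i)))"
    using sum_mono[of "{..<length L}", OF step] by simp
  also have "\<dots> = \<beta> * (f (p (length L)) - f (p 0))"
    using sum_lessThan_telescope[of "\<lambda>i. f (p i)" "length L"] by (simp add: sum_distrib_left[symmetric])
  also have "\<dots> = \<beta> * f (set L)"
    using norm by (simp add: p_def A_prefix_def normalized_def L_def)
  finally show ?thesis unfolding L_def .
qed

lemma pro_sizes_ge: "s \<in> set (pro_sizes \<tau> \<eta>) \<Longrightarrow> \<eta> \<le> s"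
  unfolding pro_sizes_def by auto

lemma length_pro_buckets_aux [simp]: "length (pro_buckets_aux A R ss) = length ss"
  by (induction ss arbitrary: R) (auto simp: Let_def)

lemma pro_buckets_aux_Cons_nth:
  "pro_buckets_aux A R (s # ss) ! 0 = set (A s R)"
  "pro_buckets_aux A R (s # ss) ! Suc j = pro_buckets_aux A (R - set (A s R)) ss ! j"
  by (simp_all add: Let_def)

lemma pro_buckets_aux_nth_subset:
  assumes "subroutine_wf V A" "R \<subseteq> V" "j < length ss"
  shows "pro_buckets_aux A R ss ! j \<subseteq> R"
  using assms(2,3)
proof (induction ss arbitrary: R j)
  case Nil
  then show ?case by simp
next
  case (Cons s ss)
  show ?case
  proof (cases j)
    case 0
    have "set (A s R) \<subseteq> R"
      using assms(1)[unfolded subroutine_wf_def, rule_format, OF Cons.prems(1)] by blast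
    then show ?thesis unfolding 0 pro_buckets_aux_Cons_nth .
  next
    case (Suc j')
    have "pro_buckets_aux A (R - set (A s R)) ss ! j' \<subseteq> R - set (A s R)"
      using Cons.prems Suc by (intro Cons.IH) auto
    then show ?thesis unfolding Suc pro_buckets_aux_Cons_nth by blast
  qed
qed

lemma pro_buckets_aux_earlier_later:
  assumes "subroutine_wf V A" "R \<subseteq> V" "a < b" "b < length ss"
  shows "\<exists>R'. R' \<subseteq> R \<and> pro_buckets_aux A R ss ! a = set (A (ss ! a) R')
              \<and> pro_buckets_aux A R ss ! b \<subseteq> R'"
  using assms(2-4)
proof (induction ss arbitrary: R a b)
  case Nil
  then show ?case by simp
next
  case (Cons s ss)
  define R\<^sub>1 where "R\<^sub>1 = R - set (A s R)"
  have "R\<^sub>1 \<subseteq> V" using Cons.prems unfolding R\<^sub>1_def by blast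
  obtain b' where b: "b = Suc b'" and "b' < length ss" using Cons.prems by (cases b) auto
  have later: "pro_buckets_aux A R (s # ss) ! b = pro_buckets_aux A R\<^sub>1 ss ! b'"
    unfolding b R\<^sub>1_def by (rule pro_buckets_aux_Cons_nth(2))
  show ?case
  proof (cases a)
    case 0
    have "pro_buckets_aux A R\<^sub>1 ss ! b' \<subseteq> R\<^sub>1"
      by (rule pro_buckets_aux_nth_subset[OF assms(1) \<open>R\<^sub>1 \<subseteq> V\<close> \<open>b' < length ss\<close>])
    moreover have "pro_buckets_aux A R (s # ss) ! a = set (A ((s # ss) ! a) R)"
      unfolding 0 by (simp add: Let_def)
    ultimately show ?thesis unfolding later R\<^sub>1_def by blast
  next
    case (Suc a')
    have "a' < b'" using Cons.prems Suc b by simp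
    obtain R' where R': "R' \<subseteq> R\<^sub>1" "pro_buckets_aux A R\<^sub>1 ss ! a' = set (A (ss ! a') R')"
      "pro_buckets_aux A R\<^sub>1 ss ! b' \<subseteq> R'"
      using Cons.IH[OF \<open>R\<^sub>1 \<subseteq> V\<close> \<open>a' < b'\<close> \<open>b' < length ss\<close>] by blast
    have earlier: "pro_buckets_aux A R (s # ss) ! a = pro_buckets_aux A R\<^sub>1 ss ! a'"
      unfolding Suc R\<^sub>1_def by (rule pro_buckets_aux_Cons_nth(2))
    show ?thesis
    proof (intro exI[of _ R'] conjI)
      show "R' \<subseteq> R" using R'(1) unfolding R\<^sub>1_def by blast
      show "pro_buckets_aux A R (s # ss) ! a = set (A ((s # ss) ! a) R')"
        unfolding earlier R'(2) by (simp add: Suc)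
      show "pro_buckets_aux A R (s # ss) ! b \<subseteq> R'" unfolding later by (rule R'(3))
    qed
  qed
qed

lemma pro_bucket_later_gain:
  assumes fin: "finite V" and norm: "normalized f" and mono: "monotone_set_fun V f"
    and sub: "submodular V f" and wf: "subroutine_wf V A" and \<beta>: "\<beta> \<ge> 1"
    and it: "beta_iterative V f A \<beta>" and \<eta>: "\<eta> \<ge> 1"
    and ab: "a < b" "b < length (pro_buckets A V \<tau> \<eta>)"
    and Y: "Y = pro_buckets A V \<tau> \<eta> ! a" and Z: "Z = pro_buckets A V \<tau> \<eta> ! b"
  shows "Y \<subseteq> V" "Z \<subseteq> V" "Z \<noteq> {} \<Longrightarrow> card Y > 0"
    and "e \<in> Z \<Longrightarrow> real (card Y) * marg f {e} Y \<le> \<beta> * f Y"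
proof -
  define s where "s = pro_sizes \<tau> \<eta> ! a"
  have "b < length (pro_sizes \<tau> \<eta>)" using ab(2) unfolding pro_buckets_def by simp
  then obtain R where "R \<subseteq> V" "pro_buckets A V \<tau> \<eta> ! a = set (A s R)"
    "pro_buckets A V \<tau> \<eta> ! b \<subseteq> R"
    using pro_buckets_aux_earlier_later[OF wf order.refl ab(1) \<open>b < length (pro_sizes \<tau> \<eta>)\<close>]
    unfolding pro_buckets_def s_def by (elim exE conjE) blast
  then have R: "R \<subseteq> V" "Y = set (A s R)" "Z \<subseteq> R" unfolding Y Z by blast+
  have "s \<in> set (pro_sizes \<tau> \<eta>)"
    using \<open>b < length (pro_sizes \<tau> \<eta>)\<close> ab(1) unfolding s_def by simp
  then have "s \<ge> 1" using pro_sizes_ge[of s \<tau> \<eta>] \<eta> by simp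
  have wfR: "distinct (A s R)" "set (A s R) \<subseteq> R" "length (A s R) = min s (card R)"
    using wf[unfolded subroutine_wf_def, rule_format, OF R(1)] by blast+
  have cardY: "card Y = length (A s R)" unfolding R(2) by (rule distinct_card[OF wfR(1)])
  show "Y \<subseteq> V" using R(1,2) wfR(2) by blast
  show "Z \<subseteq> V" using R(1,3) by blast
  show "card Y > 0" if "Z \<noteq> {}"
  proof -
    have "R \<noteq> {}" using that R(3) by blast
    moreover have "finite R" using finite_subset[OF R(1) fin] .
    ultimately have "card R > 0" by (simp add: card_gt_0_iff)
    then show ?thesis using cardY wfR(3) \<open>s \<ge> 1\<close> by simp
  qed
  show "real (card Y) * marg f {e} Y \<le> \<beta> * f Y" if "e \<in> Z"
  proof -
    have "e \<in> R" using that R(3) by blast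
    from beta_iterative_singleton_gain[OF fin norm mono sub wf \<beta> it R(1) this, of s]
    show ?thesis using cardY unfolding R(2) by simp
  qed
qed

text \<open>The hypothesis on card Y excludes the junk value \<beta> * |E| / 0 = 0.\<close>
lemma marg_le_of_singleton_gains:
  assumes mono: "monotone_set_fun V f" and sub: "submodular V f"
    and "finite E" "E \<subseteq> V" "Y \<subseteq> V" "E \<noteq> {} \<Longrightarrow> card Y > 0"
    and gain: "\<And>e. e \<in> E \<Longrightarrow> real (card Y) * marg f {e} Y \<le> \<beta> * f Y"
  shows "marg f E Y \<le> \<beta> * (real (card E) / real (card Y)) * f Y"
proof (cases "E = {}")
  case True
  then show ?thesis by (simp add: marg_def)
next
  case False
  then have "card Y > 0" using assms(6) by blast
  have "marg f E Y \<le> (\<Sum>e\<in>E. marg f {e} Y)"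
    by (rule marg_le_sum_marg_singletons[OF mono sub assms(3-5)])
  also have "\<dots> \<le> (\<Sum>e\<in>E. \<beta> / real (card Y) * f Y)"
    using gain \<open>card Y > 0\<close> by (intro sum_mono) (simp add: field_simps)
  finally show ?thesis by (simp add: ac_simps)
qed

lemma marg_over_partial_removal:
  assumes mono: "monotone_set_fun V f" and sub: "submodular V f"
    and "E\<^sub>Y \<subseteq> Y" "Y \<subseteq> V" "X \<subseteq> V" "E \<subseteq> V"
  shows "marg f E ((Y - E\<^sub>Y) \<union> X) \<le> marg f E Y + marg f E\<^sub>Y X"
proof -
  define W where "W = (Y - E\<^sub>Y) \<union> X"
  have WV: "W \<subseteq> V" and W: "W \<union> E\<^sub>Y = Y \<union> X" using assms(3-5) unfolding W_def by blast+
  have "W \<union> E \<subseteq> W \<union> E \<union> E\<^sub>Y" "W \<union> E \<union> E\<^sub>Y \<subseteq> V" using WV assms(3,4,6) by blast+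
  then have "f (W \<union> E) \<le> f (W \<union> E \<union> E\<^sub>Y)"
    using mono[unfolded monotone_set_fun_def, rule_format] by blast
  moreover have "W \<union> E \<union> E\<^sub>Y = (Y \<union> X) \<union> E" using W by blast
  ultimately have "marg f E W \<le> marg f E (Y \<union> X) + marg f E\<^sub>Y W"
    unfolding marg_def W by simp
  also have "marg f E (Y \<union> X) \<le> marg f E Y"
    using assms(4-6) by (intro submodular_marg_antimono[OF mono sub]) auto
  also have "marg f E\<^sub>Y W \<le> marg f E\<^sub>Y X"
    using WV assms(3,4) unfolding W_def by (intro submodular_marg_antimono[OF mono sub]) auto
  finally show ?thesis unfolding W_def by simp
qed

lemma marg_bound_propagates:
  assumes mono: "monotone_set_fun V f" and sub: "submodular V f"
    and "E\<^sub>Y \<subseteq> Y" "Y \<subseteq> V" "X \<subseteq> V" "E \<subseteq> V" "\<alpha> \<ge> 0" "\<gamma> \<ge> 0"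
    and recovered: "f ((Y - E\<^sub>Y) \<union> X) \<ge> (1 / (1 + \<alpha>)) * f Y"
    and removed: "marg f E\<^sub>Y X \<le> \<alpha> * f X"
    and added: "marg f E Y \<le> \<gamma> * f Y"
  shows "marg f E ((Y - E\<^sub>Y) \<union> X) \<le> (\<gamma> * (1 + \<alpha>) + \<alpha>) * f ((Y - E\<^sub>Y) \<union> X)"
proof -
  define W where "W = (Y - E\<^sub>Y) \<union> X"
  have "X \<subseteq> W" "W \<subseteq> V" using assms(3-5) unfolding W_def by blast+
  then have "f X \<le> f W" using mono[unfolded monotone_set_fun_def, rule_format] by blast
  have "f Y / (1 + \<alpha>) \<le> f W" using recovered unfolding W_def by simp
  then have "f Y \<le> (1 + \<alpha>) * f W" using \<open>\<alpha> \<ge> 0\<close> by (simp add: pos_divide_le_eq mult.commute)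
  have "marg f E W \<le> marg f E Y + marg f E\<^sub>Y X"
    unfolding W_def by (rule marg_over_partial_removal[OF mono sub assms(3-6)])
  also have "\<dots> \<le> \<gamma> * f Y + \<alpha> * f X" using added removed by (rule add_mono)
  also have "\<dots> \<le> \<gamma> * ((1 + \<alpha>) * f W) + \<alpha> * f W"
    using \<open>f Y \<le> (1 + \<alpha>) * f W\<close> \<open>f X \<le> f W\<close> \<open>\<alpha> \<ge> 0\<close> \<open>\<gamma> \<ge> 0\<close>
    by (intro add_mono mult_left_mono)
  also have "\<dots> = (\<gamma> * (1 + \<alpha>) + \<alpha>) * f W" by (simp add: algebra_simps)
  finally show ?thesis unfolding W_def .
qed

lemma value_after_removal_from_marg_bound:
  assumes mono: "monotone_set_fun V f" and sub: "submodular V f"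
    and "E \<subseteq> Z" "Z \<subseteq> V" "W \<subseteq> V" "c \<ge> 0"
    and bound: "marg f E W \<le> c * f W"
  shows "f ((Z - E) \<union> W) \<ge> (1 / (1 + c)) * f Z"
proof -
  define U where "U = (Z - E) \<union> W"
  have UV: "U \<subseteq> V" and "W \<subseteq> U" and "Z \<subseteq> U \<union> E" "U \<union> E \<subseteq> V"
    using assms(3-5) unfolding U_def by blast+
  then have "f W \<le> f U" "f Z \<le> f (U \<union> E)"
    using mono[unfolded monotone_set_fun_def, rule_format] by blast+
  have "f Z \<le> f U + marg f E U" using \<open>f Z \<le> f (U \<union> E)\<close> unfolding marg_def by simp
  also have "marg f E U \<le> marg f E W"
    using UV \<open>W \<subseteq> U\<close> assms(3,4) by (intro submodular_marg_antimono[OF mono sub]) auto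
  also have "\<dots> \<le> c * f U" using bound \<open>f W \<le> f U\<close> \<open>c \<ge> 0\<close> by (meson mult_left_mono order_trans)
  finally have "f Z / (1 + c) \<le> f U" using \<open>c \<ge> 0\<close> by (simp add: pos_divide_le_eq algebra_simps)
  then show ?thesis unfolding U_def by simp
qed

theorem lemma5:
  fixes V :: "'a set" and f :: "'a set \<Rightarrow> real"
    and A :: "nat \<Rightarrow> 'a set \<Rightarrow> 'a list"
    and k \<tau> \<eta> :: nat and \<beta> \<alpha> :: real
    and a b :: nat and Y Z E\<^sub>Y E\<^sub>Z X :: "'a set"
  assumes "finite V"
    and "normalized f" and "nonneg_on V f" and "monotone_set_fun V f" and "submodular V f"
    and "subroutine_wf V A" and "\<beta> \<ge> 1" and "beta_iterative V f A \<beta>"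
    and "\<eta> \<ge> 1"
    and "real \<eta> \<ge> 4 * (log 2 (real k) + 1)"
    and "2 \<le> \<tau>"
    and "real \<tau> \<le> real k / (3 * real \<eta> * (log 2 (real k) + 2))"
    and "a < b" and "b < length (pro_buckets A V \<tau> \<eta>)"
    and "Y = pro_buckets A V \<tau> \<eta> ! a" and "Z = pro_buckets A V \<tau> \<eta> ! b"
    and "E\<^sub>Y \<subseteq> Y" and "E\<^sub>Z \<subseteq> Z" and "X \<subseteq> V" and "\<alpha> \<ge> 0"
    and "f ((Y - E\<^sub>Y) \<union> X) \<ge> (1 / (1 + \<alpha>)) * f Y"
    and "marg f E\<^sub>Y X \<le> \<alpha> * f X"
  shows "let \<alpha>\<^sub>n\<^sub>e\<^sub>x\<^sub>t = \<beta> * (real (card E\<^sub>Z) / real (card Y)) * (1 + \<alpha>) + \<alpha> in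
           marg f E\<^sub>Z ((Y - E\<^sub>Y) \<union> X) \<le> \<alpha>\<^sub>n\<^sub>e\<^sub>x\<^sub>t * f ((Y - E\<^sub>Y) \<union> X)
         \<and> f ((Z - E\<^sub>Z) \<union> (Y - E\<^sub>Y) \<union> X) \<ge> (1 / (1 + \<alpha>\<^sub>n\<^sub>e\<^sub>x\<^sub>t)) * f Z"
proof -
  note bucket = pro_bucket_later_gain[OF assms(1,2,4-9,13-16)]
  define \<gamma> where "\<gamma> = \<beta> * (real (card E\<^sub>Z) / real (card Y))"
  have "\<gamma> \<ge> 0" using assms(7) unfolding \<gamma>_def by simp
  have EZ: "E\<^sub>Z \<subseteq> V" using bucket(2) assms(18) by blast
  have "marg f E\<^sub>Z Y \<le> \<gamma> * f Y" unfolding \<gamma>_def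
  proof (rule marg_le_of_singleton_gains[OF assms(4,5) finite_subset[OF EZ assms(1)] EZ bucket(1)])
    show "card Y > 0" if "E\<^sub>Z \<noteq> {}" using that assms(18) bucket(3) by blast
    show "real (card Y) * marg f {e} Y \<le> \<beta> * f Y" if "e \<in> E\<^sub>Z" for e
      using that assms(18) bucket(4) by blast
  qed
  then have first: "marg f E\<^sub>Z ((Y - E\<^sub>Y) \<union> X) \<le> (\<gamma> * (1 + \<alpha>) + \<alpha>) * f ((Y - E\<^sub>Y) \<union> X)"
    by (rule marg_bound_propagates[OF assms(4,5,17) bucket(1) assms(19) EZ assms(20)
          \<open>\<gamma> \<ge> 0\<close> assms(21,22)])
  have "(Y - E\<^sub>Y) \<union> X \<subseteq> V" using bucket(1) assms(19) by blast
  then have "f ((Z - E\<^sub>Z) \<union> ((Y - E\<^sub>Y) \<union> X)) \<ge> (1 / (1 + (\<gamma> * (1 + \<alpha>) + \<alpha>))) * f Z"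
    using \<open>\<gamma> \<ge> 0\<close> assms(20)
    by (intro value_after_removal_from_marg_bound[OF assms(4,5,18) bucket(2) _ _ first]) auto
  with first show ?thesis unfolding \<gamma>_def Let_def by (simp add: Un_assoc)
qed

end
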